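(* For every $z\in\mathbb{C}\setminus[0,\infty)$ and every $x\in\mathbb{Z}_+$, $$\xi_z(x)=\int_0^\infty e^{-\eta}(\eta-z)^{-1}\,[\phi_\eta(x)-\phi_z(x)]\,\mathrm{d}\eta .$$
   Context: $\mathbb{Z}_+=\{0,1,2,\dots\}$. $L_0$ is the operator on $\ell^2(\mathbb{Z}_+)$ given by $$L_0v(x)=-(x+1)v(x+1)+(2x+1)v(x)-xv(x-1)\quad (x>0),\qquad L_0v(0)=-v(1)+v(0),$$ with domain $\{v:\sum_x x^2|v(x)|^2<\infty\}$. $\overline{L_0}$ is its self-adjoint closure. $\phi_z(x)=\sum_{k=0}^{x}\binom{x}{k}\frac{(-z)^k}{k!}$ (Laguerre polynomials, defined for all $z\in\mathbb{C}$). $\psi_z=(\overline{L_0}-z)^{-1}\chi_0$ is the resolvent vector, and $\xi_z:=\psi_z-\psi_z(0)\phi_z$ is the auxiliary resolvent vector. *)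

theory Defs
  imports "HOL-Analysis.Analysis"
begin

text \<open>Sequences on Z_+ are functions nat => complex.\<close>

definition l2 :: "(nat \<Rightarrow> complex) \<Rightarrow> bool" where
  "l2 v \<longleftrightarrow> summable (\<lambda>x. (norm (v x))^2)"

definition l2norm :: "(nat \<Rightarrow> complex) \<Rightarrow> real" where
  "l2norm v = sqrt (\<Sum>x. (norm (v x))^2)"

definition dom_L0 :: "(nat \<Rightarrow> complex) \<Rightarrow> bool" where
  "dom_L0 v \<longleftrightarrow> l2 v \<and> summable (\<lambda>x. (real x)^2 * (norm (v x))^2)"

definition L0 :: "(nat \<Rightarrow> complex) \<Rightarrow> nat \<Rightarrow> complex" where
  "L0 v x = (if x = 0 then - v 1 + v 0
             else - of_nat (x+1) * v (x+1) + of_nat (2*x+1) * v x - of_nat x * v (x-1))"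

definition l2_conv :: "(nat \<Rightarrow> nat \<Rightarrow> complex) \<Rightarrow> (nat \<Rightarrow> complex) \<Rightarrow> bool" where
  "l2_conv vs u \<longleftrightarrow> l2 u \<and> (\<forall>n. l2 (vs n)) \<and>
     ((\<lambda>n. l2norm (\<lambda>x. vs n x - u x)) \<longlonglongrightarrow> 0)"

definition L0_closure_graph :: "(nat \<Rightarrow> complex) \<Rightarrow> (nat \<Rightarrow> complex) \<Rightarrow> bool" where
  "L0_closure_graph u w \<longleftrightarrow>
     (\<exists>vs. (\<forall>n. dom_L0 (vs n)) \<and> l2_conv vs u \<and> l2_conv (\<lambda>n. L0 (vs n)) w)"

definition chi0 :: "nat \<Rightarrow> complex" where
  "chi0 x = (if x = 0 then 1 else 0)"

text \<open>Resolvent vector psi_z = (closure L_0 - z)^{-1} chi_0: the unique u in the domain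
  of the closure with (closure L_0) u - z u = chi_0.\<close>
definition psi :: "complex \<Rightarrow> nat \<Rightarrow> complex" where
  "psi z = (THE u. \<exists>w. L0_closure_graph u w \<and> (\<forall>x. w x - z * u x = chi0 x))"

definition phi :: "complex \<Rightarrow> nat \<Rightarrow> complex" where
  "phi z x = (\<Sum>k=0..x. of_nat (x choose k) * (-z)^k / of_nat (fact k))"

definition xi :: "complex \<Rightarrow> nat \<Rightarrow> complex" where
  "xi z x = psi z x - psi z 0 * phi z x"

end

theory Submission
  imports Defs
begin

text \<open>For \<open>z\<close> off \<open>[0,\<infinity>)\<close> put \<open>\<psi>(x) = \<integral>\<^sub>0\<^sup>\<infinity> e\<^sup>-\<^sup>t \<phi>\<^sub>t(x) / (t - z) dt\<close>. The Laguerre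
  polynomials \<open>t \<mapsto> \<phi>\<^sub>t(x)\<close> are orthonormal for the weight \<open>e\<^sup>-\<^sup>t\<close>, so \<open>\<psi>\<close> is square-summable by
  Bessel's inequality, and their three-term recurrence gives \<open>L\<^sub>0 \<psi> = \<chi>\<^sub>0 + z \<psi>\<close>. Cut-offs
  show that \<open>(\<psi>, L\<^sub>0 \<psi>)\<close> lies in the graph of the closure of \<open>L\<^sub>0\<close>, and the closure is accretive
  (summation by parts), so the resolvent equation has no other solution there. Hence \<open>\<psi> = \<psi>\<^sub>z\<close>, and
  \<open>\<xi>\<^sub>z(x) = \<psi>\<^sub>z(x) - \<psi>\<^sub>z(0) \<phi>\<^sub>z(x)\<close> is the stated integral since \<open>\<phi>\<^sub>t(0) = 1\<close>.\<close>

section \<open>Integrals against the weight \<open>e\<^sup>-\<^sup>t\<close>\<close>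

definition poly_growth :: "(real \<Rightarrow> complex) \<Rightarrow> bool" where
  "poly_growth f \<longleftrightarrow> continuous_on {0..} f \<and> (\<exists>C k. \<forall>t\<ge>0. norm (f t) \<le> C * (1 + t) ^ k)"

lemma poly_growthI:
  "continuous_on {0..} f \<Longrightarrow> (\<And>t. t \<ge> 0 \<Longrightarrow> norm (f t) \<le> C * (1 + t) ^ k) \<Longrightarrow> poly_growth f"
  unfolding poly_growth_def by blast

lemma poly_growthE:
  assumes "poly_growth f"
  obtains C k where "C \<ge> 0" "\<And>t. t \<ge> 0 \<Longrightarrow> norm (f t) \<le> C * (1 + t) ^ k"
proof -
  obtain C k where bound: "\<And>t. t \<ge> 0 \<Longrightarrow> norm (f t) \<le> C * (1 + t) ^ k"
    using assms unfolding poly_growth_def by blast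
  have "C \<ge> 0" using bound[of 0] by (simp add: order_trans[OF norm_ge_zero])
  with bound that show ?thesis by blast
qed

lemma poly_growth_continuous_on: "poly_growth f \<Longrightarrow> continuous_on {0..} f"
  unfolding poly_growth_def by blast

lemma poly_growth_const: "poly_growth (\<lambda>t. c)"
  by (rule poly_growthI[where C = "norm c" and k = 0]) auto

lemma poly_growth_of_real: "poly_growth (\<lambda>t. of_real t)"
  by (rule poly_growthI[where C = 1 and k = 1]) (auto intro!: continuous_intros)

lemma poly_growth_add:
  assumes "poly_growth f" "poly_growth g"
  shows "poly_growth (\<lambda>t. f t + g t)"
proof -
  obtain C1 k1 where C1: "C1 \<ge> 0" "\<And>t. t \<ge> 0 \<Longrightarrow> norm (f t) \<le> C1 * (1 + t) ^ k1"
    using assms(1) by (elim poly_growthE) blast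
  obtain C2 k2 where C2: "C2 \<ge> 0" "\<And>t. t \<ge> 0 \<Longrightarrow> norm (g t) \<le> C2 * (1 + t) ^ k2"
    using assms(2) by (elim poly_growthE) blast
  show ?thesis
  proof (rule poly_growthI[where C = "C1 + C2" and k = "k1 + k2"])
    show "continuous_on {0..} (\<lambda>t. f t + g t)"
      using assms by (intro continuous_intros poly_growth_continuous_on)
    fix t :: real assume t: "t \<ge> 0"
    have "(1 + t) ^ k1 \<le> (1 + t) ^ (k1 + k2)" "(1 + t) ^ k2 \<le> (1 + t) ^ (k1 + k2)"
      using t by (auto intro!: power_increasing)
    then have "C1 * (1 + t) ^ k1 + C2 * (1 + t) ^ k2 \<le> (C1 + C2) * (1 + t) ^ (k1 + k2)"
      using C1(1) C2(1) by (simp add: distrib_right add_mono mult_left_mono)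
    moreover have "norm (f t + g t) \<le> C1 * (1 + t) ^ k1 + C2 * (1 + t) ^ k2"
      using C1(2)[OF t] C2(2)[OF t] norm_triangle_ineq[of "f t" "g t"] by linarith
    ultimately show "norm (f t + g t) \<le> (C1 + C2) * (1 + t) ^ (k1 + k2)" by linarith
  qed
qed

lemma poly_growth_mult:
  assumes "poly_growth f" "poly_growth g"
  shows "poly_growth (\<lambda>t. f t * g t)"
proof -
  obtain C1 k1 where C1: "C1 \<ge> 0" "\<And>t. t \<ge> 0 \<Longrightarrow> norm (f t) \<le> C1 * (1 + t) ^ k1"
    using assms(1) by (elim poly_growthE) blast
  obtain C2 k2 where C2: "C2 \<ge> 0" "\<And>t. t \<ge> 0 \<Longrightarrow> norm (g t) \<le> C2 * (1 + t) ^ k2"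
    using assms(2) by (elim poly_growthE) blast
  show ?thesis
  proof (rule poly_growthI[where C = "C1 * C2" and k = "k1 + k2"])
    show "continuous_on {0..} (\<lambda>t. f t * g t)"
      using assms by (intro continuous_intros poly_growth_continuous_on)
    fix t :: real assume t: "t \<ge> 0"
    have "norm (f t * g t) \<le> (C1 * (1 + t) ^ k1) * (C2 * (1 + t) ^ k2)"
      unfolding norm_mult using C1 C2 t by (intro mult_mono) auto
    then show "norm (f t * g t) \<le> (C1 * C2) * (1 + t) ^ (k1 + k2)"
      by (simp add: algebra_simps power_add)
  qed
qed

lemma poly_growth_minus: "poly_growth f \<Longrightarrow> poly_growth (\<lambda>t. - f t)"
  unfolding poly_growth_def by (auto intro!: continuous_intros)

lemma poly_growth_diff: "poly_growth f \<Longrightarrow> poly_growth g \<Longrightarrow> poly_growth (\<lambda>t. f t - g t)"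
  using poly_growth_add[of f "\<lambda>t. - g t"] poly_growth_minus[of g] by simp

lemma poly_growth_cnj: "poly_growth f \<Longrightarrow> poly_growth (\<lambda>t. cnj (f t))"
  unfolding poly_growth_def by (auto intro!: continuous_intros)

lemma poly_growth_cmult: "poly_growth f \<Longrightarrow> poly_growth (\<lambda>t. c * f t)"
  by (rule poly_growth_mult[OF poly_growth_const])

lemma poly_growth_sum:
  "finite A \<Longrightarrow> (\<And>i. i \<in> A \<Longrightarrow> poly_growth (f i)) \<Longrightarrow> poly_growth (\<lambda>t. \<Sum>i\<in>A. f i t)"
  by (induction A rule: finite_induct) (auto intro: poly_growth_add poly_growth_const)

lemma poly_growth_power: "poly_growth (\<lambda>t. of_real t ^ k)"
  by (induction k) (auto intro: poly_growth_mult poly_growth_of_real poly_growth_const)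

lemma has_integral_power_exp: "((\<lambda>t::real. t ^ k * exp (- t)) has_integral fact k) {0..}"
proof -
  have "((\<lambda>t. t powr (real k + 1 - 1) / exp t) has_integral Gamma (real k + 1)) {0..}"
    by (rule Gamma_integral_real) simp
  moreover have "Gamma (real k + 1) = fact k"
    using Gamma_fact[of k, where 'a = real] by (simp add: add.commute)
  ultimately have "((\<lambda>t. t powr real k / exp t) has_integral fact k) {0..}" by simp
  then show ?thesis
    by (subst has_integral_spike_finite_eq[of "{0}"]) (auto simp: powr_realpow exp_minus field_simps)
qed

lemma one_plus_power_le:
  fixes t :: real
  assumes "t \<ge> 0"
  shows "(1 + t) ^ k \<le> 2 ^ k * (1 + t ^ k)"
proof (cases "t \<le> 1")
  case True
  then have "(1 + t) ^ k \<le> 2 ^ k" using assms by (intro power_mono) auto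
  then show ?thesis using assms by (simp add: order_trans)
next
  case False
  then have "(1 + t) ^ k \<le> (2 * t) ^ k" by (intro power_mono) auto
  then show ?thesis by (simp add: power_mult_distrib order_trans)
qed

lemma poly_growth_exp_absolutely_integrable:
  assumes "poly_growth f"
  shows "(\<lambda>t. of_real (exp (- t)) * f t) absolutely_integrable_on {0..}"
proof -
  obtain C k where C: "C \<ge> 0" "\<And>t. t \<ge> 0 \<Longrightarrow> norm (f t) \<le> C * (1 + t) ^ k"
    using assms by (elim poly_growthE) blast
  have "((\<lambda>t::real. t ^ k * exp (- t) + t ^ 0 * exp (- t)) has_integral (fact k + fact 0)) {0..}"
    by (intro has_integral_add has_integral_power_exp)
  then have "(\<lambda>t::real. exp (- t) * (1 + t ^ k)) integrable_on {0..}"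
    unfolding integrable_on_def by (auto simp: algebra_simps)
  then have majorant: "(\<lambda>t. (C * 2 ^ k) * (exp (- t) * (1 + t ^ k))) integrable_on {0..}"
    by (rule integrable_on_mult_right)
  show ?thesis
  proof (rule measurable_bounded_by_integrable_imp_absolutely_integrable[OF _ _ majorant])
    show "(\<lambda>t. complex_of_real (exp (- t)) * f t) \<in> borel_measurable (lebesgue_on {0..})"
      using poly_growth_continuous_on[OF assms]
      by (intro continuous_imp_measurable_on_sets_lebesgue continuous_intros) auto
    fix t :: real assume "t \<in> {0..}"
    then have "norm (f t) \<le> C * (2 ^ k * (1 + t ^ k))"
      using C one_plus_power_le[of t k] by (auto intro: order_trans mult_left_mono)
    then have "exp (- t) * norm (f t) \<le> exp (- t) * (C * (2 ^ k * (1 + t ^ k)))"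
      by (rule mult_left_mono) simp
    then show "norm (complex_of_real (exp (- t)) * f t) \<le> (C * 2 ^ k) * (exp (- t) * (1 + t ^ k))"
      by (simp add: norm_mult algebra_simps)
  qed auto
qed

definition weighted_integral :: "(real \<Rightarrow> complex) \<Rightarrow> complex" where
  "weighted_integral f = integral {0..} (\<lambda>t. of_real (exp (- t)) * f t)"

lemma has_integral_weighted_integral:
  "poly_growth f \<Longrightarrow> ((\<lambda>t. of_real (exp (- t)) * f t) has_integral weighted_integral f) {0..}"
  unfolding weighted_integral_def
  using poly_growth_exp_absolutely_integrable set_lebesgue_integral_eq_integral(1) has_integral_integral
  by blast

lemma weighted_integral_unique:
  "((\<lambda>t. of_real (exp (- t)) * f t) has_integral y) {0..} \<Longrightarrow> weighted_integral f = y"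
  by (simp add: weighted_integral_def integral_unique)

lemma weighted_integral_cong:
  "(\<And>t. t \<ge> 0 \<Longrightarrow> f t = g t) \<Longrightarrow> weighted_integral f = weighted_integral g"
  unfolding weighted_integral_def by (intro integral_cong) auto

lemma weighted_integral_add:
  assumes "poly_growth f" "poly_growth g"
  shows "weighted_integral (\<lambda>t. f t + g t) = weighted_integral f + weighted_integral g"
  using has_integral_add[OF assms[THEN has_integral_weighted_integral]]
  by (intro weighted_integral_unique) (simp add: algebra_simps)

lemma weighted_integral_diff:
  assumes "poly_growth f" "poly_growth g"
  shows "weighted_integral (\<lambda>t. f t - g t) = weighted_integral f - weighted_integral g"
  using has_integral_diff[OF assms[THEN has_integral_weighted_integral]]
  by (intro weighted_integral_unique) (simp add: algebra_simps)

lemma weighted_integral_cmult: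
  "poly_growth f \<Longrightarrow> weighted_integral (\<lambda>t. c * f t) = c * weighted_integral f"
  using has_integral_mult_right[OF has_integral_weighted_integral, of f c]
  by (intro weighted_integral_unique) (simp add: algebra_simps)

lemma weighted_integral_sum:
  assumes "finite A" "\<And>i. i \<in> A \<Longrightarrow> poly_growth (f i)"
  shows "weighted_integral (\<lambda>t. \<Sum>i\<in>A. f i t) = (\<Sum>i\<in>A. weighted_integral (f i))"
  using has_integral_sum[of A "\<lambda>i t. of_real (exp (- t)) * f i t", OF assms(1)]
    has_integral_weighted_integral[OF assms(2)]
  by (intro weighted_integral_unique) (simp add: sum_distrib_left)

lemma weighted_integral_cnj:
  "poly_growth f \<Longrightarrow> weighted_integral (\<lambda>t. cnj (f t)) = cnj (weighted_integral f)"
  using has_integral_linear[OF has_integral_weighted_integral bounded_linear_cnj, of f]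
  by (intro weighted_integral_unique) (simp add: o_def)

lemma weighted_integral_power: "weighted_integral (\<lambda>t. of_real t ^ k) = fact k"
proof -
  have "((\<lambda>t. of_real (t ^ k * exp (- t)) :: complex) has_integral of_real (fact k)) {0..}"
    using has_integral_linear[OF has_integral_power_exp bounded_linear_of_real] by (simp add: o_def)
  then show ?thesis
    by (intro weighted_integral_unique) (auto simp: mult.commute elim: has_integral_eq[rotated])
qed

lemma weighted_integral_nonneg:
  assumes "poly_growth f" and nonneg: "\<And>t. t \<ge> 0 \<Longrightarrow> Im (f t) = 0 \<and> Re (f t) \<ge> 0"
  shows "Im (weighted_integral f) = 0 \<and> Re (weighted_integral f) \<ge> 0"
proof
  note I = has_integral_weighted_integral[OF assms(1)]
  have "((\<lambda>t::real. 0::real) has_integral Im (weighted_integral f)) {0..}"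
    by (rule has_integral_eq[OF _ has_integral_linear[OF I bounded_linear_Im]]) (use nonneg in auto)
  then show "Im (weighted_integral f) = 0" by simp
  have "((\<lambda>t. exp (- t) * Re (f t)) has_integral Re (weighted_integral f)) {0..}"
    by (rule has_integral_eq[OF _ has_integral_linear[OF I bounded_linear_Re]]) auto
  then show "Re (weighted_integral f) \<ge> 0"
    by (rule has_integral_nonneg) (use nonneg in auto)
qed

lemma weighted_integral_mult_cnj_nonneg:
  assumes "poly_growth f"
  shows "Re (weighted_integral (\<lambda>t. f t * cnj (f t))) \<ge> 0"
proof (rule conjunct2[OF weighted_integral_nonneg])
  show "poly_growth (\<lambda>t. f t * cnj (f t))"
    using assms by (intro poly_growth_mult poly_growth_cnj)
  fix t
  show "Im (f t * cnj (f t)) = 0 \<and> Re (f t * cnj (f t)) \<ge> 0"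
    by (simp only: complex_norm_square[symmetric]) simp
qed

section \<open>Laguerre polynomials\<close>

lemma choose_laguerre_recurrence:
  "(n + 1) * (n + 1 choose j) + n * (n - 1 choose j) = (2 * n + 1) * (n choose j) + j * (n choose (j - 1))"
proof (cases j)
  case 0
  then show ?thesis by simp
next
  case (Suc i)
  show ?thesis
  proof (cases n)
    case 0
    then show ?thesis using Suc by (cases i) auto
  next
    case (Suc m)
    define a where "a = n choose i"
    define b where "b = n choose Suc i"
    define c where "c = m choose i"
    define d where "d = m choose Suc i"
    have "b = c + d" unfolding b_def c_def d_def Suc by simp
    have "n + 1 choose Suc i = a + b" unfolding a_def b_def by simp
    have "(n - i) * a = n * c" unfolding a_def c_def using binomial_absorb_comp[of n i] Suc by simp
    have "(n + 1) * a = (n - i) * a + (i + 1) * a"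
      by (cases "i \<le> n") (auto simp: a_def algebra_simps)
    have "(n + 1) * (n + 1 choose j) + n * (n - 1 choose j) = (n + 1) * a + (n + 1) * b + n * d"
      using \<open>n + 1 choose Suc i = a + b\<close> \<open>j = Suc i\<close> Suc d_def by (simp add: algebra_simps)
    also have "\<dots> = (n - i) * a + (i + 1) * a + (n + 1) * b + n * d"
      using \<open>(n + 1) * a = _\<close> by simp
    also have "\<dots> = n * c + n * d + (i + 1) * a + (n + 1) * b"
      using \<open>(n - i) * a = n * c\<close> by simp
    also have "\<dots> = (2 * n + 1) * (n choose j) + j * (n choose (j - 1))"
      using \<open>b = c + d\<close> \<open>j = Suc i\<close> by (simp add: a_def b_def algebra_simps)
    finally show ?thesis .
  qed
qed

lemma phi_eq_sum_atMost:
  "n \<le> N \<Longrightarrow> phi z n = (\<Sum>k=0..N. of_nat (n choose k) * (- z) ^ k / of_nat (fact k))"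
  unfolding phi_def by (rule sum.mono_neutral_left) auto

lemma mult_phi_eq_sum:
  "z * phi z n = (\<Sum>j=0..Suc n. - of_nat (j * (n choose (j - 1))) * (- z) ^ j / of_nat (fact j))"
proof -
  have "(\<Sum>j=0..Suc n. - of_nat (j * (n choose (j - 1))) * (- z) ^ j / of_nat (fact j))
      = (\<Sum>j=0..n. - of_nat (Suc j * (n choose j)) * (- z) ^ Suc j / of_nat (fact (Suc j)))"
    by (subst sum.atLeast0_atMost_Suc_shift)
       (simp only: o_def diff_Suc_1 mult_zero_left of_nat_0 minus_zero div_0 add_0_left)
  also have "\<dots> = (\<Sum>j=0..n. z * (of_nat (n choose j) * (- z) ^ j / of_nat (fact j)))"
  proof (rule sum.cong[OF refl])
    fix j
    have nz: "(of_nat (Suc j) :: complex) \<noteq> 0"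
      by (metis nat.distinct(1) of_nat_eq_0_iff)
    have "- of_nat (Suc j * (n choose j)) * (- z) ^ Suc j / (of_nat (Suc j) * of_nat (fact j))
        = of_nat (Suc j) * (z * (of_nat (n choose j) * (- z) ^ j)) / (of_nat (Suc j) * of_nat (fact j))"
      by (simp only: of_nat_mult power_Suc) (simp del: of_nat_Suc of_nat_fact add: algebra_simps)
    also have "\<dots> = z * (of_nat (n choose j) * (- z) ^ j) / of_nat (fact j)"
      by (rule mult_divide_mult_cancel_left[OF nz])
    finally show "- of_nat (Suc j * (n choose j)) * (- z) ^ Suc j / of_nat (fact (Suc j))
        = z * (of_nat (n choose j) * (- z) ^ j / of_nat (fact j))"
      by (simp only: fact_Suc of_nat_mult) simp
  qed
  also have "\<dots> = z * phi z n" unfolding phi_def by (simp add: sum_distrib_left)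
  finally show ?thesis by simp
qed

lemma phi_recurrence:
  "z * phi z n = - of_nat (n + 1) * phi z (n + 1) + of_nat (2 * n + 1) * phi z n - of_nat n * phi z (n - 1)"
proof -
  have e1: "of_nat (n + 1) * phi z (n + 1) = (\<Sum>j=0..Suc n. of_nat ((n + 1) * (n + 1 choose j)) * (- z) ^ j / of_nat (fact j))"
    by (simp only: phi_def sum_distrib_left of_nat_mult mult.assoc times_divide_eq_right Suc_eq_plus1)
  have e2: "of_nat (2 * n + 1) * phi z n = (\<Sum>j=0..Suc n. of_nat ((2 * n + 1) * (n choose j)) * (- z) ^ j / of_nat (fact j))"
    by (simp only: phi_eq_sum_atMost[of n "Suc n", OF le_SucI[OF order_refl]] sum_distrib_left
        of_nat_mult mult.assoc times_divide_eq_right)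
  have e3: "of_nat n * phi z (n - 1) = (\<Sum>j=0..Suc n. of_nat (n * (n - 1 choose j)) * (- z) ^ j / of_nat (fact j))"
    by (simp only: phi_eq_sum_atMost[of "n - 1" "Suc n", OF le_SucI[OF diff_le_self]] sum_distrib_left
        of_nat_mult mult.assoc times_divide_eq_right)
  have coeff: "- of_nat ((n + 1) * (n + 1 choose j)) + of_nat ((2 * n + 1) * (n choose j)) - of_nat (n * (n - 1 choose j))
      = (- of_nat (j * (n choose (j - 1))) :: complex)" for j
  proof -
    have "(of_nat ((n + 1) * (n + 1 choose j) + n * (n - 1 choose j)) :: complex)
        = of_nat ((2 * n + 1) * (n choose j) + j * (n choose (j - 1)))"
      by (subst choose_laguerre_recurrence) rule
    then show ?thesis unfolding of_nat_add by (simp add: algebra_simps)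
  qed
  have "- of_nat (n + 1) * phi z (n + 1) + of_nat (2 * n + 1) * phi z n - of_nat n * phi z (n - 1)
      = (\<Sum>j=0..Suc n. (- of_nat ((n + 1) * (n + 1 choose j)) + of_nat ((2 * n + 1) * (n choose j))
          - of_nat (n * (n - 1 choose j))) * (- z) ^ j / of_nat (fact j))"
    unfolding mult_minus_left e1 e2 e3
    by (simp only: sum_negf[symmetric] sum.distrib[symmetric] sum_subtractf[symmetric])
       (rule sum.cong[OF refl], simp add: divide_inverse ring_distribs)
  also have "\<dots> = z * phi z n" unfolding coeff by (rule mult_phi_eq_sum[symmetric])
  finally show ?thesis by simp
qed

definition laguerre :: "nat \<Rightarrow> real \<Rightarrow> complex" where
  "laguerre n t = phi (of_real t) n"

lemma laguerre_eq_sum: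
  "laguerre n t = (\<Sum>k=0..n. (of_nat (n choose k) * (- 1) ^ k / of_nat (fact k)) * of_real t ^ k)"
  unfolding laguerre_def phi_def by (rule sum.cong) (auto simp: power_minus[of "complex_of_real t"])

lemma laguerre_0 [simp]: "laguerre 0 t = 1"
  by (simp add: laguerre_def phi_def)

lemma cnj_laguerre [simp]: "cnj (laguerre n t) = laguerre n t"
  by (simp add: laguerre_eq_sum)

lemma laguerre_recurrence:
  "of_real t * laguerre n t
     = - of_nat (n + 1) * laguerre (n + 1) t + of_nat (2 * n + 1) * laguerre n t - of_nat n * laguerre (n - 1) t"
  unfolding laguerre_def by (rule phi_recurrence)

lemma poly_growth_laguerre: "poly_growth (laguerre n)"
  unfolding laguerre_eq_sum[abs_def]
  by (intro poly_growth_sum poly_growth_cmult poly_growth_power) auto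

lemma weighted_integral_laguerre: "weighted_integral (laguerre n) = (if n = 0 then 1 else 0)"
proof -
  have "weighted_integral (laguerre n)
      = (\<Sum>k=0..n. (of_nat (n choose k) * (- 1) ^ k / of_nat (fact k)) * weighted_integral (\<lambda>t. of_real t ^ k))"
    unfolding laguerre_eq_sum[abs_def]
    by (simp only: weighted_integral_sum[OF finite_atLeastAtMost poly_growth_cmult[OF poly_growth_power]]
        weighted_integral_cmult[OF poly_growth_power])
  also have "\<dots> = (\<Sum>k\<le>n. (- 1) ^ k * of_nat (n choose k))"
    by (simp add: weighted_integral_power atLeast0AtMost mult.commute)
  also have "\<dots> = (if n = 0 then 1 else 0)"
    using choose_alternating_sum[of n, where 'a = complex] by auto
  finally show ?thesis .
qed

definition laguerre_gram :: "nat \<Rightarrow> nat \<Rightarrow> complex" where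
  "laguerre_gram m n = weighted_integral (\<lambda>t. laguerre m t * laguerre n t)"

lemma weighted_integral_of_real_mult_laguerre:
  "weighted_integral (\<lambda>t. of_real t * laguerre m t * laguerre n t)
     = - of_nat (m + 1) * laguerre_gram (m + 1) n + of_nat (2 * m + 1) * laguerre_gram m n
       - of_nat m * laguerre_gram (m - 1) n"
proof -
  have "weighted_integral (\<lambda>t. of_real t * laguerre m t * laguerre n t)
      = weighted_integral (\<lambda>t. - of_nat (m + 1) * (laguerre (m + 1) t * laguerre n t)
          + of_nat (2 * m + 1) * (laguerre m t * laguerre n t) - of_nat m * (laguerre (m - 1) t * laguerre n t))"
    by (rule weighted_integral_cong) (simp add: laguerre_recurrence algebra_simps)
  then show ?thesis
    by (simp add: laguerre_gram_def weighted_integral_diff weighted_integral_add weighted_integral_cmult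
        poly_growth_add poly_growth_diff poly_growth_cmult poly_growth_mult poly_growth_laguerre)
qed

text \<open>Multiplication by \<open>t\<close> is symmetric for the weighted integral, so the Gram matrix obeys the
  three-term recurrence in each index; this determines row \<open>k + 1\<close> from rows \<open>k\<close> and \<open>k - 1\<close>.\<close>
lemma laguerre_orthonormal: "laguerre_gram m n = (if m = n then 1 else 0)"
proof (induction m arbitrary: n rule: less_induct)
  case (less m)
  show ?case
  proof (cases m)
    case 0
    then show ?thesis by (simp add: laguerre_gram_def weighted_integral_laguerre)
  next
    case (Suc k)
    have "weighted_integral (\<lambda>t. of_real t * laguerre k t * laguerre n t)
        = weighted_integral (\<lambda>t. of_real t * laguerre n t * laguerre k t)"
      by (rule weighted_integral_cong) (simp add: algebra_simps)
    then have "- of_nat (k + 1) * laguerre_gram (k + 1) n + of_nat (2 * k + 1) * laguerre_gram k n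
          - of_nat k * laguerre_gram (k - 1) n
        = - of_nat (n + 1) * laguerre_gram k (n + 1) + of_nat (2 * n + 1) * laguerre_gram k n
          - of_nat n * laguerre_gram k (n - 1)"
      by (simp only: weighted_integral_of_real_mult_laguerre laguerre_gram_def mult.commute[of "laguerre k _"])
    moreover have "laguerre_gram k j = (if k = j then 1 else 0)" "laguerre_gram (k - 1) j = (if k - 1 = j then 1 else 0)" for j
      using less Suc by auto
    ultimately have "of_nat (k + 1) * laguerre_gram (k + 1) n = of_nat (k + 1) * (if k + 1 = n then 1 else 0)"
      by (auto simp: algebra_simps split: if_splits)
    then show ?thesis using Suc by (simp del: of_nat_Suc)
  qed
qed

section \<open>Square-summable sequences\<close>

lemma norm_add_power2_le: "(norm (u + v :: 'a :: real_normed_vector))^2 \<le> 2 * (norm u)^2 + 2 * (norm v)^2"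
proof -
  have "(norm (u + v))^2 \<le> (norm u + norm v)^2" by (intro power_mono norm_triangle_ineq) auto
  also have "\<dots> \<le> 2 * (norm u)^2 + 2 * (norm v)^2"
    using sum_squares_bound[of "norm u" "norm v"] by (simp add: power2_sum)
  finally show ?thesis .
qed

lemma l2_add: "l2 a \<Longrightarrow> l2 b \<Longrightarrow> l2 (\<lambda>x. a x + b x)"
  unfolding l2_def
  by (rule summable_comparison_test'[where g = "\<lambda>x. 2 * (norm (a x))^2 + 2 * (norm (b x))^2" and N = 0])
     (auto intro: summable_add summable_mult norm_add_power2_le)

lemma l2_cmult: "l2 a \<Longrightarrow> l2 (\<lambda>x. c * a x)"
  unfolding l2_def by (simp add: norm_mult power_mult_distrib summable_mult)

lemma l2_minus: "l2 a \<Longrightarrow> l2 (\<lambda>x. - a x)"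
  unfolding l2_def by simp

lemma l2_diff: "l2 a \<Longrightarrow> l2 b \<Longrightarrow> l2 (\<lambda>x. a x - b x)"
  using l2_add[of a "\<lambda>x. - b x"] l2_minus[of b] by simp

lemma l2_finite_support: "(\<And>x. x \<ge> N \<Longrightarrow> a x = 0) \<Longrightarrow> l2 a"
  unfolding l2_def by (rule summable_finite[of "{..<N}"]) auto

definition l2_sqnorm :: "(nat \<Rightarrow> complex) \<Rightarrow> real" where
  "l2_sqnorm a = (\<Sum>x. (norm (a x))^2)"

definition l2_inner :: "(nat \<Rightarrow> complex) \<Rightarrow> (nat \<Rightarrow> complex) \<Rightarrow> complex" where
  "l2_inner a b = (\<Sum>x. a x * cnj (b x))"

lemma l2_sqnorm_nonneg: "l2 a \<Longrightarrow> l2_sqnorm a \<ge> 0"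
  unfolding l2_sqnorm_def l2_def by (rule suminf_nonneg) auto

lemma l2norm_power2: "l2 a \<Longrightarrow> (l2norm a)^2 = l2_sqnorm a"
  using l2_sqnorm_nonneg unfolding l2norm_def l2_sqnorm_def by simp

lemma l2_sqnorm_add_le:
  assumes "l2 a" "l2 b"
  shows "l2_sqnorm (\<lambda>x. a x + b x) \<le> 2 * l2_sqnorm a + 2 * l2_sqnorm b"
proof -
  have s: "summable (\<lambda>x. (norm (a x))^2)" "summable (\<lambda>x. (norm (b x))^2)"
    using assms unfolding l2_def by auto
  have "l2_sqnorm (\<lambda>x. a x + b x) \<le> (\<Sum>x. 2 * (norm (a x))^2 + 2 * (norm (b x))^2)"
    unfolding l2_sqnorm_def using l2_add[OF assms] unfolding l2_def
    by (intro suminf_le norm_add_power2_le summable_add summable_mult s) auto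
  also have "\<dots> = 2 * l2_sqnorm a + 2 * l2_sqnorm b"
    unfolding l2_sqnorm_def using s by (simp add: suminf_add[symmetric] summable_mult suminf_mult)
  finally show ?thesis .
qed

lemma l2_sqnorm_eq_0D: "l2 a \<Longrightarrow> l2_sqnorm a = 0 \<Longrightarrow> a x = 0"
  using suminf_eq_zero_iff[of "\<lambda>x. (norm (a x))^2"] unfolding l2_sqnorm_def l2_def by auto

lemma summable_norm_mult_l2:
  assumes "l2 a" "l2 b"
  shows "summable (\<lambda>x. norm (a x) * norm (b x))"
proof (rule summable_comparison_test'[where g = "\<lambda>x. (norm (a x))^2 + (norm (b x))^2" and N = 0])
  show "summable (\<lambda>x. (norm (a x))^2 + (norm (b x))^2)"
    using assms unfolding l2_def by (rule summable_add)
  fix x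
  have "2 * norm (a x) * norm (b x) \<le> (norm (a x))^2 + (norm (b x))^2"
    by (rule sum_squares_bound)
  then show "norm (norm (a x) * norm (b x)) \<le> (norm (a x))^2 + (norm (b x))^2"
    using mult_nonneg_nonneg[OF norm_ge_zero norm_ge_zero, of "a x" "b x"] by (simp add: abs_mult, linarith)
qed

lemma suminf_norm_mult_le_l2norm:
  assumes "l2 a" "l2 b"
  shows "(\<Sum>x. norm (a x) * norm (b x)) \<le> l2norm a * l2norm b"
proof (rule suminf_le_const[OF summable_norm_mult_l2[OF assms]])
  fix n
  have "(\<Sum>x<n. norm (a x) * norm (b x)) \<le> L2_set (\<lambda>x. norm (a x)) {..<n} * L2_set (\<lambda>x. norm (b x)) {..<n}"
    using L2_set_mult_ineq[of "\<lambda>x. norm (a x)" "\<lambda>x. norm (b x)" "{..<n}"] by simp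
  also have "\<dots> \<le> l2norm a * l2norm b"
    unfolding L2_set_def l2norm_def using assms l2_sqnorm_nonneg[OF assms(1)] l2_sqnorm_nonneg[OF assms(2)]
    unfolding l2_def l2_sqnorm_def
    by (intro mult_mono real_sqrt_le_mono sum_le_suminf) (auto simp: sum_nonneg)
  finally show "(\<Sum>x<n. norm (a x) * norm (b x)) \<le> l2norm a * l2norm b" .
qed

lemma summable_l2_inner: "l2 a \<Longrightarrow> l2 b \<Longrightarrow> summable (\<lambda>x. a x * cnj (b x))"
  by (rule summable_norm_cancel) (simp add: norm_mult summable_norm_mult_l2)

lemma norm_l2_inner_le: "l2 a \<Longrightarrow> l2 b \<Longrightarrow> norm (l2_inner a b) \<le> l2norm a * l2norm b"
  unfolding l2_inner_def
  using summable_norm[of "\<lambda>x. a x * cnj (b x)"] summable_norm_mult_l2 suminf_norm_mult_le_l2norm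
  by (fastforce simp: norm_mult)

lemma l2_inner_self: "l2 a \<Longrightarrow> l2_inner a a = of_real (l2_sqnorm a)"
  unfolding l2_inner_def l2_sqnorm_def l2_def
  by (simp add: complex_mult_cnj cmod_power2 suminf_of_real)

lemma l2_inner_diff_left: "l2 a \<Longrightarrow> l2 c \<Longrightarrow> l2 b \<Longrightarrow> l2_inner (\<lambda>x. a x - c x) b = l2_inner a b - l2_inner c b"
  unfolding l2_inner_def by (subst suminf_diff) (auto simp: summable_l2_inner algebra_simps)

lemma l2_inner_diff_right: "l2 a \<Longrightarrow> l2 b \<Longrightarrow> l2 c \<Longrightarrow> l2_inner a (\<lambda>x. b x - c x) = l2_inner a b - l2_inner a c"
  unfolding l2_inner_def by (subst suminf_diff) (auto simp: summable_l2_inner algebra_simps)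

lemma l2_inner_cmult_left: "l2 a \<Longrightarrow> l2 b \<Longrightarrow> l2_inner (\<lambda>x. c * a x) b = c * l2_inner a b"
  unfolding l2_inner_def by (subst suminf_mult[symmetric]) (auto simp: summable_l2_inner algebra_simps)

lemma l2_convI:
  assumes "l2 u" "\<And>n. l2 (vs n)" "(\<lambda>n. l2_sqnorm (\<lambda>x. vs n x - u x)) \<longlonglongrightarrow> 0"
  shows "l2_conv vs u"
proof -
  have "(\<lambda>n. sqrt (l2_sqnorm (\<lambda>x. vs n x - u x))) \<longlonglongrightarrow> sqrt 0"
    by (intro tendsto_intros assms)
  then show ?thesis
    unfolding l2_conv_def l2norm_def l2_sqnorm_def using assms by simp
qed

lemma l2_conv_sqnormD:
  assumes "l2_conv vs u"
  shows "(\<lambda>n. l2_sqnorm (\<lambda>x. vs n x - u x)) \<longlonglongrightarrow> 0"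
proof -
  have "(\<lambda>n. (l2norm (\<lambda>x. vs n x - u x))^2) \<longlonglongrightarrow> 0^2"
    using assms unfolding l2_conv_def by (intro tendsto_intros) auto
  moreover have "l2 (\<lambda>x. vs n x - u x)" for n
    using assms l2_diff unfolding l2_conv_def by blast
  ultimately show ?thesis by (simp add: l2norm_power2)
qed

lemma l2_conv_diff:
  assumes "l2_conv as a" "l2_conv bs b"
  shows "l2_conv (\<lambda>n x. as n x - bs n x) (\<lambda>x. a x - b x)"
proof (rule l2_convI)
  have l2: "l2 a" "\<And>n. l2 (as n)" "l2 b" "\<And>n. l2 (bs n)"
    using assms unfolding l2_conv_def by auto
  then show "l2 (\<lambda>x. a x - b x)" "\<And>n. l2 (\<lambda>x. as n x - bs n x)" by (auto intro: l2_diff)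
  have "(\<lambda>n. 2 * l2_sqnorm (\<lambda>x. as n x - a x) + 2 * l2_sqnorm (\<lambda>x. - (bs n x - b x))) \<longlonglongrightarrow> 2 * 0 + 2 * 0"
    using l2_conv_sqnormD[OF assms(1)] l2_conv_sqnormD[OF assms(2)]
    unfolding l2_sqnorm_def by (intro tendsto_intros) (auto simp: norm_minus_commute)
  then have "(\<lambda>n. 2 * l2_sqnorm (\<lambda>x. as n x - a x) + 2 * l2_sqnorm (\<lambda>x. - (bs n x - b x))) \<longlonglongrightarrow> 0"
    by simp
  then show "(\<lambda>n. l2_sqnorm (\<lambda>x. as n x - bs n x - (a x - b x))) \<longlonglongrightarrow> 0"
  proof (rule Lim_null_comparison[rotated], intro always_eventually allI)
    fix n
    have "l2_sqnorm (\<lambda>x. as n x - bs n x - (a x - b x)) = l2_sqnorm (\<lambda>x. (as n x - a x) + - (bs n x - b x))"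
      by (simp add: algebra_simps)
    also have "\<dots> \<le> 2 * l2_sqnorm (\<lambda>x. as n x - a x) + 2 * l2_sqnorm (\<lambda>x. - (bs n x - b x))"
      using l2 by (intro l2_sqnorm_add_le l2_diff l2_minus)
    finally show "norm (l2_sqnorm (\<lambda>x. as n x - bs n x - (a x - b x)))
        \<le> 2 * l2_sqnorm (\<lambda>x. as n x - a x) + 2 * l2_sqnorm (\<lambda>x. - (bs n x - b x))"
      using l2_sqnorm_nonneg[OF l2_diff[OF l2_diff[OF l2(2,4)] l2_diff[OF l2(1,3)]]] by simp
  qed
qed

lemma tendsto_l2_inner:
  assumes "l2_conv as a" "l2_conv bs b"
  shows "(\<lambda>n. l2_inner (as n) (bs n)) \<longlonglongrightarrow> l2_inner a b"
proof -
  have l2: "l2 a" "\<And>n. l2 (as n)" "l2 b" "\<And>n. l2 (bs n)"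
    using assms unfolding l2_conv_def by auto
  define p where "p n = l2norm (\<lambda>x. as n x - a x)" for n
  define q where "q n = l2norm (\<lambda>x. bs n x - b x)" for n
  have "p \<longlonglongrightarrow> 0" "q \<longlonglongrightarrow> 0" using assms unfolding l2_conv_def p_def q_def by auto
  then have "(\<lambda>n. p n * q n + p n * l2norm b + l2norm a * q n) \<longlonglongrightarrow> 0 * 0 + 0 * l2norm b + l2norm a * 0"
    by (intro tendsto_intros)
  then have "(\<lambda>n. p n * q n + p n * l2norm b + l2norm a * q n) \<longlonglongrightarrow> 0"
    by simp
  then have "(\<lambda>n. l2_inner (as n) (bs n) - l2_inner a b) \<longlonglongrightarrow> 0"
  proof (rule Lim_null_comparison[rotated], intro always_eventually allI)
    fix n
    define da where "da x = as n x - a x" for x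
    define db where "db x = bs n x - b x" for x
    have l2d: "l2 da" "l2 db" unfolding da_def db_def using l2 by (auto intro: l2_diff)
    have "l2_inner (as n) (bs n) - l2_inner a b = l2_inner da db + l2_inner da b + l2_inner a db"
      using l2 l2d unfolding da_def db_def by (simp add: l2_inner_diff_left l2_inner_diff_right)
    also have "norm \<dots> \<le> norm (l2_inner da db) + norm (l2_inner da b) + norm (l2_inner a db)"
      by (rule norm_triangle_le[OF add_mono[OF norm_triangle_ineq order_refl]])
    also have "\<dots> \<le> p n * q n + p n * l2norm b + l2norm a * q n"
      unfolding p_def q_def da_def[symmetric] db_def[symmetric]
      using l2 l2d by (intro add_mono norm_l2_inner_le)
    finally show "norm (l2_inner (as n) (bs n) - l2_inner a b) \<le> p n * q n + p n * l2norm b + l2norm a * q n" .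
  qed
  then show ?thesis by (rule LIM_zero_cancel)
qed

lemma sums_tail:
  fixes f :: "nat \<Rightarrow> 'a :: real_normed_vector"
  assumes "summable f"
  shows "(\<lambda>x. if m \<le> x then f x else 0) sums (suminf f - (\<Sum>x<m. f x))"
proof -
  have "(\<lambda>x. f x - (if x \<in> {..<m} then f x else 0)) sums (suminf f - (\<Sum>x\<in>{..<m}. f x))"
    by (intro sums_diff summable_sums assms sums_If_finite_set) auto
  moreover have "(\<lambda>x. f x - (if x \<in> {..<m} then f x else 0)) = (\<lambda>x. if m \<le> x then f x else 0)"
    by (auto simp: fun_eq_iff)
  ultimately show ?thesis by simp
qed

lemma tendsto_tail_suminf:
  fixes f :: "nat \<Rightarrow> 'a :: real_normed_vector"
  assumes "summable f"
  shows "(\<lambda>m. \<Sum>x. if m \<le> x then f x else 0) \<longlonglongrightarrow> 0"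
proof -
  have "(\<lambda>m. suminf f - (\<Sum>x<m. f x)) \<longlonglongrightarrow> suminf f - suminf f"
    by (intro tendsto_intros summable_LIMSEQ assms)
  then show ?thesis using sums_tail[OF assms] by (simp add: sums_iff)
qed

lemma l2_conv_tail_dominated:
  assumes "l2 u" "\<And>n. l2 (vs n)" "summable f"
    and dom: "\<And>n x. (norm (vs n x - u x))^2 \<le> (if Suc n \<le> x then f x else 0)"
  shows "l2_conv vs u"
proof (rule l2_convI[OF assms(1,2)])
  have "(\<lambda>n. \<Sum>x. if Suc n \<le> x then f x else 0) \<longlonglongrightarrow> 0"
    by (rule LIMSEQ_Suc[OF tendsto_tail_suminf[OF assms(3)]])
  then show "(\<lambda>n. l2_sqnorm (\<lambda>x. vs n x - u x)) \<longlonglongrightarrow> 0"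
  proof (rule Lim_null_comparison[rotated], intro always_eventually allI)
    fix n
    have "l2_sqnorm (\<lambda>x. vs n x - u x) \<le> (\<Sum>x. if Suc n \<le> x then f x else 0)"
      unfolding l2_sqnorm_def using l2_diff[OF assms(2,1)] sums_tail[OF assms(3)] dom unfolding l2_def
      by (intro suminf_le) (auto simp: sums_iff)
    then show "norm (l2_sqnorm (\<lambda>x. vs n x - u x)) \<le> (\<Sum>x. if Suc n \<le> x then f x else 0)"
      using l2_sqnorm_nonneg[OF l2_diff[OF assms(2,1)]] by simp
  qed
qed

section \<open>The closure of \<open>L\<^sub>0\<close> is accretive\<close>

lemma L0_eq: "L0 v x = - of_nat (x + 1) * v (x + 1) + of_nat (2 * x + 1) * v x - of_nat x * v (x - 1)"
  by (simp add: L0_def)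

lemma L0_diff: "L0 (\<lambda>x. a x - b x) = (\<lambda>x. L0 a x - L0 b x)"
  by (rule ext) (simp add: L0_def algebra_simps)

lemma dom_L0_diff:
  assumes "dom_L0 a" "dom_L0 b"
  shows "dom_L0 (\<lambda>x. a x - b x)"
proof -
  have s: "summable (\<lambda>x. (real x)^2 * (norm (a x))^2)" "summable (\<lambda>x. (real x)^2 * (norm (b x))^2)"
    using assms unfolding dom_L0_def by auto
  have "(real x)^2 * (norm (a x - b x))^2 \<le> 2 * ((real x)^2 * (norm (a x))^2) + 2 * ((real x)^2 * (norm (b x))^2)" for x
    using mult_left_mono[OF norm_add_power2_le[of "a x" "- b x"], of "(real x)^2"] by (simp add: algebra_simps)
  then have "summable (\<lambda>x. (real x)^2 * (norm (a x - b x))^2)"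
    by (intro summable_comparison_test'[OF summable_add[OF summable_mult[OF s(1)] summable_mult[OF s(2)]],
        where N = 0]) simp
  then show ?thesis using assms unfolding dom_L0_def by (auto intro: l2_diff)
qed

lemma sum_L0_mult_cnj:
  "(\<Sum>x<Suc N. L0 v x * cnj (v x))
     = (\<Sum>x<N. of_nat (x + 1) * ((v (x + 1) - v x) * cnj (v (x + 1) - v x)))
       + of_nat (N + 1) * (v N - v (N + 1)) * cnj (v N)"
proof (induction N)
  case 0
  then show ?case by (simp add: L0_def algebra_simps)
next
  case (Suc N)
  have "(\<Sum>x<Suc (Suc N). L0 v x * cnj (v x)) = (\<Sum>x<Suc N. L0 v x * cnj (v x)) + L0 v (Suc N) * cnj (v (Suc N))"
    by simp
  also have "\<dots> = (\<Sum>x<Suc N. of_nat (x + 1) * ((v (x + 1) - v x) * cnj (v (x + 1) - v x)))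
      + of_nat (Suc N + 1) * (v (Suc N) - v (Suc N + 1)) * cnj (v (Suc N))"
    unfolding Suc by (simp add: L0_def algebra_simps)
  finally show ?case .
qed

lemma dom_L0_boundary_tendsto:
  assumes "dom_L0 v"
  shows "(\<lambda>N. of_nat (N + 1) * (v N - v (N + 1)) * cnj (v N)) \<longlonglongrightarrow> 0"
proof -
  have s1: "summable (\<lambda>x. (norm (v x))^2)" and s2: "summable (\<lambda>x. (real x * norm (v x))^2)"
    using assms unfolding dom_L0_def l2_def by (auto simp: power_mult_distrib)
  have "(\<lambda>n. norm (v n)) \<longlonglongrightarrow> 0"
    using tendsto_real_sqrt[OF summable_LIMSEQ_zero[OF s1]] by simp
  moreover have "(\<lambda>n. real n * norm (v n)) \<longlonglongrightarrow> 0"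
    using tendsto_real_sqrt[OF summable_LIMSEQ_zero[OF s2]] by simp
  ultimately have "(\<lambda>n. (real n * norm (v n) + norm (v n)) * (norm (v n) + norm (v (Suc n)))) \<longlonglongrightarrow> (0 + 0) * (0 + 0)"
    by (intro tendsto_intros LIMSEQ_Suc)
  then have lim: "(\<lambda>n. (real n * norm (v n) + norm (v n)) * (norm (v n) + norm (v (Suc n)))) \<longlonglongrightarrow> 0"
    by simp
  show ?thesis
  proof (rule Lim_null_comparison[OF _ lim], intro always_eventually allI)
    fix n
    have "norm (of_nat (n + 1) * (v n - v (n + 1)) * cnj (v n)) = (real n + 1) * norm (v n - v (Suc n)) * norm (v n)"
      by (simp add: norm_mult add.commute del: of_nat_Suc)
    also have "\<dots> \<le> (real n + 1) * (norm (v n) + norm (v (Suc n))) * norm (v n)"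
      by (intro mult_right_mono mult_left_mono norm_triangle_ineq4) auto
    finally show "norm (of_nat (n + 1) * (v n - v (n + 1)) * cnj (v n))
        \<le> (real n * norm (v n) + norm (v n)) * (norm (v n) + norm (v (Suc n)))"
      by (simp add: algebra_simps)
  qed
qed

lemma L0_inner_nonneg:
  assumes "dom_L0 v" "l2 (L0 v)"
  shows "Im (l2_inner (L0 v) v) = 0 \<and> Re (l2_inner (L0 v) v) \<ge> 0"
proof -
  define R where "R N = (\<Sum>x<N. (real x + 1) * (norm (v (x + 1) - v x))^2)" for N
  define B where "B N = of_nat (N + 1) * (v N - v (N + 1)) * cnj (v N)" for N
  have "(\<lambda>N. \<Sum>x<Suc N. L0 v x * cnj (v x)) \<longlonglongrightarrow> l2_inner (L0 v) v"
    unfolding l2_inner_def using assms unfolding dom_L0_def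
    by (intro LIMSEQ_Suc summable_LIMSEQ summable_l2_inner) auto
  moreover have "(\<Sum>x<Suc N. L0 v x * cnj (v x)) = of_real (R N) + B N" for N
    unfolding sum_L0_mult_cnj R_def B_def complex_mult_cnj by (simp add: cmod_power2 of_real_sum add.commute)
  ultimately have lim: "(\<lambda>N. of_real (R N) + B N) \<longlonglongrightarrow> l2_inner (L0 v) v"
    by simp
  have B: "B \<longlonglongrightarrow> 0"
    unfolding B_def by (rule dom_L0_boundary_tendsto[OF assms(1)])
  have "(\<lambda>N. Im (of_real (R N) + B N)) \<longlonglongrightarrow> Im 0"
    using tendsto_Im[OF B] by simp
  then have "Im (l2_inner (L0 v) v) = 0"
    using LIMSEQ_unique[OF tendsto_Im[OF lim]] by simp
  moreover have "(\<lambda>N. Re (of_real (R N) + B N) - Re (B N)) \<longlonglongrightarrow> Re (l2_inner (L0 v) v) - Re 0"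
    by (intro tendsto_diff tendsto_Re lim B)
  then have "(\<lambda>N. R N) \<longlonglongrightarrow> Re (l2_inner (L0 v) v)"
    by simp
  then have "Re (l2_inner (L0 v) v) \<ge> 0"
    by (rule LIMSEQ_le_const) (auto simp: R_def intro!: exI[of _ 0] sum_nonneg)
  ultimately show ?thesis by simp
qed

lemma L0_closure_graph_diff:
  assumes "L0_closure_graph u1 w1" "L0_closure_graph u2 w2"
  shows "L0_closure_graph (\<lambda>x. u1 x - u2 x) (\<lambda>x. w1 x - w2 x)"
proof -
  obtain vs1 where "\<And>n. dom_L0 (vs1 n)" "l2_conv vs1 u1" "l2_conv (\<lambda>n. L0 (vs1 n)) w1"
    using assms(1) unfolding L0_closure_graph_def by blast
  moreover obtain vs2 where "\<And>n. dom_L0 (vs2 n)" "l2_conv vs2 u2" "l2_conv (\<lambda>n. L0 (vs2 n)) w2"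
    using assms(2) unfolding L0_closure_graph_def by blast
  ultimately show ?thesis
    unfolding L0_closure_graph_def
    by (intro exI[of _ "\<lambda>n x. vs1 n x - vs2 n x"]) (simp add: dom_L0_diff l2_conv_diff L0_diff)
qed

lemma L0_closure_graph_inner_nonneg:
  assumes "L0_closure_graph u w"
  shows "Im (l2_inner w u) = 0 \<and> Re (l2_inner w u) \<ge> 0"
proof -
  obtain vs where vs: "\<And>n. dom_L0 (vs n)" "l2_conv vs u" "l2_conv (\<lambda>n. L0 (vs n)) w"
    using assms unfolding L0_closure_graph_def by blast
  have lim: "(\<lambda>n. l2_inner (L0 (vs n)) (vs n)) \<longlonglongrightarrow> l2_inner w u"
    by (rule tendsto_l2_inner[OF vs(3,2)])
  have pos: "Im (l2_inner (L0 (vs n)) (vs n)) = 0 \<and> Re (l2_inner (L0 (vs n)) (vs n)) \<ge> 0" for n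
    using vs(3) unfolding l2_conv_def by (intro L0_inner_nonneg vs(1)) auto
  have "(\<lambda>n. Im (l2_inner (L0 (vs n)) (vs n))) \<longlonglongrightarrow> Im (l2_inner w u)"
    by (rule tendsto_Im[OF lim])
  then have "Im (l2_inner w u) = 0"
    using pos by (simp add: LIMSEQ_const_iff)
  moreover have "Re (l2_inner w u) \<ge> 0"
    using tendsto_Re[OF lim] pos by (intro LIMSEQ_le_const) auto
  ultimately show ?thesis ..
qed

lemma L0_closure_graph_resolvent_unique:
  assumes z: "z \<notin> complex_of_real ` {0..}"
    and "L0_closure_graph u1 w1" "\<forall>x. w1 x - z * u1 x = chi0 x"
    and "L0_closure_graph u2 w2" "\<forall>x. w2 x - z * u2 x = chi0 x"
  shows "u1 = u2"
proof -
  define d where "d x = u1 x - u2 x" for x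
  have graph: "L0_closure_graph d (\<lambda>x. z * d x)"
    using L0_closure_graph_diff[OF assms(2,4)] assms(3,5) unfolding d_def
    by (simp add: algebra_simps fun_eq_iff)
  have "l2 d"
    using graph unfolding L0_closure_graph_def l2_conv_def by blast
  then have "Im (z * of_real (l2_sqnorm d)) = 0 \<and> Re (z * of_real (l2_sqnorm d)) \<ge> 0"
    using L0_closure_graph_inner_nonneg[OF graph] by (simp add: l2_inner_cmult_left l2_inner_self)
  moreover have "z = of_real (Re z)" if "Im z = 0" "Re z \<ge> 0"
    using that by (simp add: complex_eq_iff)
  ultimately have "l2_sqnorm d = 0"
    using z l2_sqnorm_nonneg[OF \<open>l2 d\<close>] by (auto simp: zero_le_mult_iff)
  then show ?thesis
    using l2_sqnorm_eq_0D[OF \<open>l2 d\<close>] by (auto simp: d_def fun_eq_iff)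
qed

section \<open>Cut-off approximation\<close>

definition cutoff :: "nat \<Rightarrow> nat \<Rightarrow> real" where
  "cutoff m x = (if x \<le> m then 1 else if x \<le> 2 * m then (real (2 * m) - real x) / real m else 0)"

lemma cutoff_low: "x \<le> m \<Longrightarrow> cutoff m x = 1"
  unfolding cutoff_def by simp

lemma cutoff_high: "m \<ge> 1 \<Longrightarrow> 2 * m \<le> x \<Longrightarrow> cutoff m x = 0"
  unfolding cutoff_def by auto

lemma cutoff_bounds:
  assumes "m \<ge> 1"
  shows "0 \<le> cutoff m x \<and> cutoff m x \<le> 1"
  using assms by (auto simp: cutoff_def field_simps)

lemma cutoff_step:
  assumes "m \<ge> 1"
  shows "\<bar>real (y + 1) * (cutoff m (y + 1) - cutoff m y)\<bar> \<le> (if m \<le> y then 2 else 0)"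
proof (cases "m \<le> y \<and> y < 2 * m")
  case True
  then have "cutoff m (y + 1) - cutoff m y = - 1 / real m"
    using assms by (auto simp: cutoff_def field_simps)
  moreover have "real (y + 1) \<le> 2 * real m" "real m > 0"
    using True assms by linarith+
  ultimately show ?thesis
    using True by (simp add: abs_mult divide_le_eq del: of_nat_Suc of_nat_add)
next
  case False
  then show ?thesis
    using assms by (auto simp: cutoff_low cutoff_high)
qed

lemma cutoff_step_back:
  assumes "m \<ge> 1"
  shows "\<bar>real x * (cutoff m (x - 1) - cutoff m x)\<bar> \<le> (if m \<le> x then 2 else 0)"
proof (cases x)
  case (Suc y)
  then have "\<bar>real x * (cutoff m (x - 1) - cutoff m x)\<bar> \<le> (if m \<le> y then 2 else 0)"
    using cutoff_step[OF assms, of y] by (simp add: abs_minus_commute right_diff_distrib)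
  then show ?thesis
    using Suc by (auto split: if_splits)
qed simp

lemma L0_of_real_mult:
  "L0 (\<lambda>y. of_real (f y) * u y) x
     = of_real (f x) * L0 u x - of_nat (x + 1) * of_real (f (x + 1) - f x) * u (x + 1)
       - of_nat x * of_real (f (x - 1) - f x) * u (x - 1)"
  unfolding L0_eq by (simp add: algebra_simps)

lemma norm_add3_power2_le:
  "(norm (a + b + c :: 'a :: real_normed_vector))^2 \<le> 2 * (norm a)^2 + 4 * (norm b)^2 + 4 * (norm c)^2"
  using norm_add_power2_le[of a "b + c"] norm_add_power2_le[of b c] by (simp add: add.assoc)

lemma cutoff_mult_error_le:
  fixes u :: "nat \<Rightarrow> complex"
  assumes "m \<ge> 1"
  shows "(norm (of_real (cutoff m x) * u x - u x))^2 \<le> (if m \<le> x then (norm (u x))^2 else 0)"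
proof (cases "m \<le> x")
  case True
  have "of_real (cutoff m x) * u x - u x = of_real (cutoff m x - 1) * u x"
    by (simp add: algebra_simps)
  then have "norm (of_real (cutoff m x) * u x - u x) = \<bar>cutoff m x - 1\<bar> * norm (u x)"
    by (simp only: norm_mult norm_of_real)
  also have "\<dots> \<le> norm (u x)"
    using cutoff_bounds[OF assms, of x] by (intro mult_left_le_one_le) auto
  finally show ?thesis
    using True by (simp add: power_mono)
qed (simp add: cutoff_low)

lemma L0_cutoff_mult_error_le:
  assumes "m \<ge> 1"
  shows "(norm (L0 (\<lambda>y. of_real (cutoff m y) * u y) x - L0 u x))^2
    \<le> (if m \<le> x then 2 * (norm (L0 u x))^2 + 16 * (norm (u (x + 1)))^2 + 16 * (norm (u (x - 1)))^2 else 0)"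
proof (cases "m \<le> x")
  case True
  let ?c = "cutoff m"
  define a where "a = of_real (?c x - 1) * L0 u x"
  define b where "b = - (of_nat (x + 1) * of_real (?c (x + 1) - ?c x) * u (x + 1))"
  define c where "c = - (of_nat x * of_real (?c (x - 1) - ?c x) * u (x - 1))"
  have "L0 (\<lambda>y. of_real (?c y) * u y) x - L0 u x = a + b + c"
    unfolding L0_of_real_mult a_def b_def c_def by (simp add: algebra_simps)
  moreover have "norm a \<le> norm (L0 u x)"
    using cutoff_bounds[OF assms, of x] unfolding a_def norm_mult norm_of_real
    by (intro mult_left_le_one_le) auto
  moreover have "norm b \<le> 2 * norm (u (x + 1))"
    using cutoff_step[OF assms, of x] True unfolding b_def norm_minus_cancel norm_mult norm_of_real norm_of_nat abs_mult
    by (intro mult_right_mono) auto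
  moreover have "norm c \<le> 2 * norm (u (x - 1))"
    using cutoff_step_back[OF assms, of x] True unfolding c_def norm_minus_cancel norm_mult norm_of_real norm_of_nat abs_mult
    by (intro mult_right_mono) auto
  ultimately have "(norm (L0 (\<lambda>y. of_real (?c y) * u y) x - L0 u x))^2
      \<le> 2 * (norm (L0 u x))^2 + 4 * (2 * norm (u (x + 1)))^2 + 4 * (2 * norm (u (x - 1)))^2"
    using norm_add3_power2_le[of a b c] power_mono[of "norm a"] power_mono[of "norm b"] power_mono[of "norm c"]
    by (smt (verit) norm_ge_zero)
  then show ?thesis
    using True by (simp add: power_mult_distrib)
next
  case False
  then show ?thesis
    unfolding L0_of_real_mult by (simp add: cutoff_low)
qed

text \<open>The closure of \<open>L\<^sub>0\<close> contains the maximal operator: the cut-offs, whose discrete derivative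
  is \<open>O(1/m)\<close> on \<open>[m, 2m]\<close>, approximate \<open>u\<close> in the graph norm.\<close>
lemma L0_closure_graph_if_l2:
  assumes "l2 u" "l2 (L0 u)"
  shows "L0_closure_graph u (L0 u)"
proof -
  define vs where "vs n x = of_real (cutoff (Suc n) x) * u x" for n x
  have vs0: "x \<ge> 2 * Suc n \<Longrightarrow> vs n x = 0" for n x
    unfolding vs_def by (simp add: cutoff_high)
  have l2_vs: "l2 (vs n)" for n
    by (rule l2_finite_support[of "2 * Suc n"]) (rule vs0)
  have "summable (\<lambda>x. (real x)^2 * (norm (vs n x))^2)" for n
    by (rule summable_finite[of "{..<2 * Suc n}"]) (auto simp: vs0)
  then have dom_vs: "dom_L0 (vs n)" for n
    unfolding dom_L0_def using l2_vs by blast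
  have l2_L0_vs: "l2 (L0 (vs n))" for n
    by (rule l2_finite_support[of "2 * Suc n + 1"]) (simp add: L0_eq vs0)
  have sq: "summable (\<lambda>x. (norm (u x))^2)" "summable (\<lambda>x. (norm (L0 u x))^2)"
    using assms unfolding l2_def by auto
  define F where "F x = 2 * (norm (L0 u x))^2 + 16 * (norm (u (x + 1)))^2 + 16 * (norm (u (x - 1)))^2" for x
  have "summable (\<lambda>x. (norm (u (x + 1)))^2)" "summable (\<lambda>x. (norm (u (x - 1)))^2)"
    using sq(1) summable_Suc_iff[of "\<lambda>x. (norm (u x))^2"] summable_Suc_iff[of "\<lambda>x. (norm (u (x - 1)))^2"]
    by simp_all
  then have "summable F"
    unfolding F_def using sq(2) by (intro summable_add summable_mult)
  moreover have "(norm (L0 (vs n) x - L0 u x))^2 \<le> (if Suc n \<le> x then F x else 0)" for n x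
    unfolding vs_def F_def by (rule L0_cutoff_mult_error_le) simp
  ultimately have "l2_conv (\<lambda>n. L0 (vs n)) (L0 u)"
    by (rule l2_conv_tail_dominated[OF assms(2) l2_L0_vs])
  moreover have "(norm (vs n x - u x))^2 \<le> (if Suc n \<le> x then (norm (u x))^2 else 0)" for n x
    unfolding vs_def by (rule cutoff_mult_error_le) simp
  then have "l2_conv vs u"
    by (rule l2_conv_tail_dominated[OF assms(1) l2_vs sq(1)])
  ultimately show ?thesis
    unfolding L0_closure_graph_def using dom_vs by blast
qed

section \<open>The resolvent vector as a Laguerre integral\<close>

lemma laguerre_finite_parseval:
  "weighted_integral (\<lambda>t. (\<Sum>x<N. c x * laguerre x t) * cnj (\<Sum>x<N. c x * laguerre x t))
     = (\<Sum>x<N. c x * cnj (c x))"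
proof -
  have "weighted_integral (\<lambda>t. (\<Sum>x<N. c x * laguerre x t) * cnj (\<Sum>y<N. c y * laguerre y t))
      = weighted_integral (\<lambda>t. \<Sum>x<N. \<Sum>y<N. (c x * cnj (c y)) * (laguerre x t * laguerre y t))"
    by (rule weighted_integral_cong) (simp add: sum_product algebra_simps)
  also have "\<dots> = (\<Sum>x<N. \<Sum>y<N. (c x * cnj (c y)) * laguerre_gram x y)"
    unfolding laguerre_gram_def
    by (simp add: weighted_integral_sum weighted_integral_cmult poly_growth_sum poly_growth_cmult
        poly_growth_mult poly_growth_laguerre)
  finally show ?thesis
    by (simp add: laguerre_orthonormal if_distrib cong: if_cong)
qed

lemma laguerre_bessel:
  assumes g: "poly_growth g"
  shows "(\<Sum>x<N. (norm (weighted_integral (\<lambda>t. laguerre x t * g t)))^2) \<le> Re (weighted_integral (\<lambda>t. g t * cnj (g t)))"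
proof -
  define c where "c x = weighted_integral (\<lambda>t. laguerre x t * g t)" for x
  define S where "S t = (\<Sum>x<N. c x * laguerre x t)" for t
  define A where "A = (\<Sum>x<N. c x * cnj (c x))"
  have S: "poly_growth S" "poly_growth (\<lambda>t. cnj (S t))"
    unfolding S_def by (intro poly_growth_cnj poly_growth_sum poly_growth_cmult poly_growth_laguerre; simp)+
  have gS: "weighted_integral (\<lambda>t. g t * cnj (S t)) = A"
  proof -
    have "weighted_integral (\<lambda>t. g t * cnj (S t)) = weighted_integral (\<lambda>t. \<Sum>x<N. cnj (c x) * (laguerre x t * g t))"
      by (rule weighted_integral_cong) (simp add: S_def sum_distrib_left algebra_simps)
    also have "\<dots> = (\<Sum>x<N. cnj (c x) * c x)"
      using poly_growth_mult[OF poly_growth_laguerre g]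
      by (subst weighted_integral_sum) (auto simp: c_def weighted_integral_cmult intro: poly_growth_cmult)
    finally show ?thesis
      by (simp add: A_def mult.commute)
  qed
  have Sg: "weighted_integral (\<lambda>t. S t * cnj (g t)) = A"
  proof -
    have "weighted_integral (\<lambda>t. S t * cnj (g t)) = weighted_integral (\<lambda>t. cnj (g t * cnj (S t)))"
      by (rule weighted_integral_cong) simp
    also have "\<dots> = cnj A"
      using gS weighted_integral_cnj[of "\<lambda>t. g t * cnj (S t)"] g S by (simp add: poly_growth_mult)
    finally show ?thesis
      by (simp add: A_def mult.commute)
  qed
  have SS: "weighted_integral (\<lambda>t. S t * cnj (S t)) = A"
    unfolding S_def A_def by (rule laguerre_finite_parseval)
  have "weighted_integral (\<lambda>t. (g t - S t) * cnj (g t - S t))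
      = weighted_integral (\<lambda>t. g t * cnj (g t) - g t * cnj (S t) - S t * cnj (g t) + S t * cnj (S t))"
    by (rule weighted_integral_cong) (simp add: algebra_simps)
  also have "\<dots> = weighted_integral (\<lambda>t. g t * cnj (g t)) - A"
    using gS Sg SS g S
    by (simp add: weighted_integral_add weighted_integral_diff poly_growth_add poly_growth_diff
        poly_growth_mult poly_growth_cnj)
  finally have "Re (weighted_integral (\<lambda>t. g t * cnj (g t))) - Re A
      = Re (weighted_integral (\<lambda>t. (g t - S t) * cnj (g t - S t)))"
    by simp
  moreover have "Re (weighted_integral (\<lambda>t. (g t - S t) * cnj (g t - S t))) \<ge> 0"
    using g S by (intro weighted_integral_mult_cnj_nonneg poly_growth_diff)
  moreover have "Re A = (\<Sum>x<N. (norm (c x))^2)"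
    unfolding A_def by (simp add: complex_mult_cnj cmod_power2)
  ultimately show ?thesis
    unfolding c_def by simp
qed

lemma halfline_dist_bound:
  assumes "z \<notin> complex_of_real ` {0..}"
  obtains d where "d > 0" "\<And>t. t \<ge> 0 \<Longrightarrow> d \<le> norm (complex_of_real t - z)"
proof (cases "Im z = 0")
  case True
  then have "Re z < 0"
    using assms by (metis atLeast_iff complex_is_Real_iff image_eqI not_le order_less_imp_le of_real_Re)
  show ?thesis
  proof (rule that)
    show "- Re z > 0" using \<open>Re z < 0\<close> by simp
    fix t :: real assume "t \<ge> 0"
    then have "- Re z \<le> \<bar>Re (complex_of_real t - z)\<bar>" by simp
    then show "- Re z \<le> norm (complex_of_real t - z)" using abs_Re_le_cmod by (rule order_trans)
  qed
next
  case False
  show ?thesis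
  proof (rule that)
    show "\<bar>Im z\<bar> > 0" using False by simp
    fix t :: real
    show "\<bar>Im z\<bar> \<le> norm (complex_of_real t - z)"
      using abs_Im_le_cmod[of "complex_of_real t - z"] by simp
  qed
qed

definition resolvent_kernel :: "complex \<Rightarrow> real \<Rightarrow> complex" where
  "resolvent_kernel z t = 1 / (complex_of_real t - z)"

lemma poly_growth_resolvent_kernel:
  assumes z: "z \<notin> complex_of_real ` {0..}"
  shows "poly_growth (resolvent_kernel z)"
proof -
  obtain d where d: "d > 0" "\<And>t. t \<ge> 0 \<Longrightarrow> d \<le> norm (complex_of_real t - z)"
    using halfline_dist_bound[OF z] by blast
  show ?thesis
  proof (rule poly_growthI[where C = "1 / d" and k = 0])
    show "continuous_on {0..} (resolvent_kernel z)"
      unfolding resolvent_kernel_def using z by (intro continuous_intros) auto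
    fix t :: real assume "t \<ge> 0"
    then show "norm (resolvent_kernel z t) \<le> 1 / d * (1 + t) ^ 0"
      using d by (simp add: resolvent_kernel_def norm_divide frac_le)
  qed
qed

lemma of_real_mult_resolvent_kernel:
  assumes "z \<notin> complex_of_real ` {0..}" "t \<ge> 0"
  shows "of_real t * resolvent_kernel z t = 1 + z * resolvent_kernel z t"
proof -
  have "complex_of_real t - z \<noteq> 0" using assms by auto
  then show ?thesis by (simp add: resolvent_kernel_def field_simps)
qed

definition psi_integral :: "complex \<Rightarrow> nat \<Rightarrow> complex" where
  "psi_integral z x = weighted_integral (\<lambda>t. laguerre x t * resolvent_kernel z t)"

text \<open>The recurrence of the Laguerre polynomials turns \<open>L\<^sub>0\<close> into multiplication by \<open>t\<close> under the integral.\<close>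
lemma L0_psi_integral:
  assumes z: "z \<notin> complex_of_real ` {0..}"
  shows "L0 (psi_integral z) x = chi0 x + z * psi_integral z x"
proof -
  note pg = poly_growth_mult[OF poly_growth_laguerre poly_growth_resolvent_kernel[OF z]]
  have "L0 (psi_integral z) x = weighted_integral (\<lambda>t. - of_nat (x + 1) * (laguerre (x + 1) t * resolvent_kernel z t)
      + of_nat (2 * x + 1) * (laguerre x t * resolvent_kernel z t) - of_nat x * (laguerre (x - 1) t * resolvent_kernel z t))"
    unfolding L0_eq psi_integral_def
    by (simp add: weighted_integral_diff weighted_integral_add weighted_integral_cmult
        poly_growth_add poly_growth_cmult poly_growth_diff pg)
  also have "\<dots> = weighted_integral (\<lambda>t. laguerre x t + z * (laguerre x t * resolvent_kernel z t))"
  proof (rule weighted_integral_cong)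
    fix t :: real assume t: "t \<ge> 0"
    have "- of_nat (x + 1) * (laguerre (x + 1) t * resolvent_kernel z t)
        + of_nat (2 * x + 1) * (laguerre x t * resolvent_kernel z t) - of_nat x * (laguerre (x - 1) t * resolvent_kernel z t)
        = (- of_nat (x + 1) * laguerre (x + 1) t + of_nat (2 * x + 1) * laguerre x t
            - of_nat x * laguerre (x - 1) t) * resolvent_kernel z t"
      by (simp add: algebra_simps)
    also have "\<dots> = (of_real t * laguerre x t) * resolvent_kernel z t"
      by (simp only: laguerre_recurrence)
    also have "\<dots> = laguerre x t * (of_real t * resolvent_kernel z t)"
      by (simp only: ac_simps)
    also have "\<dots> = laguerre x t + z * (laguerre x t * resolvent_kernel z t)"
      unfolding of_real_mult_resolvent_kernel[OF z t] by (simp add: algebra_simps)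
    finally show "- of_nat (x + 1) * (laguerre (x + 1) t * resolvent_kernel z t)
        + of_nat (2 * x + 1) * (laguerre x t * resolvent_kernel z t) - of_nat x * (laguerre (x - 1) t * resolvent_kernel z t)
        = laguerre x t + z * (laguerre x t * resolvent_kernel z t)" .
  qed
  also have "\<dots> = chi0 x + z * psi_integral z x"
    unfolding psi_integral_def
    by (simp add: weighted_integral_add weighted_integral_cmult weighted_integral_laguerre
        poly_growth_laguerre poly_growth_cmult pg chi0_def)
  finally show ?thesis .
qed

lemma l2_psi_integral:
  assumes z: "z \<notin> complex_of_real ` {0..}"
  shows "l2 (psi_integral z)"
  unfolding l2_def
proof (rule bounded_imp_summable)
  fix n
  show "(\<Sum>k\<le>n. (norm (psi_integral z k))^2)
      \<le> Re (weighted_integral (\<lambda>t. resolvent_kernel z t * cnj (resolvent_kernel z t)))"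
    using laguerre_bessel[OF poly_growth_resolvent_kernel[OF z], of "Suc n"]
    by (simp add: psi_integral_def lessThan_Suc_atMost)
qed simp

lemma psi_eq_psi_integral:
  assumes z: "z \<notin> complex_of_real ` {0..}"
  shows "psi z = psi_integral z"
proof -
  have L0: "L0 (psi_integral z) = (\<lambda>x. chi0 x + z * psi_integral z x)"
    by (simp add: fun_eq_iff L0_psi_integral[OF z])
  have "l2 chi0"
    by (rule l2_finite_support[of 1]) (simp add: chi0_def)
  then have "L0_closure_graph (psi_integral z) (\<lambda>x. chi0 x + z * psi_integral z x)"
    using L0_closure_graph_if_l2[OF l2_psi_integral[OF z]] unfolding L0
    by (simp add: l2_add l2_cmult l2_psi_integral[OF z])
  then show ?thesis
    unfolding psi_def
    using L0_closure_graph_resolvent_unique[OF z]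
    by (intro the_equality) auto
qed

theorem mainTheorem8:
  fixes z :: complex and x :: nat
  assumes "z \<notin> complex_of_real ` {0..}"
  shows "((\<lambda>\<eta>::real. exp (- complex_of_real \<eta>) / (complex_of_real \<eta> - z)
            * (phi (complex_of_real \<eta>) x - phi z x)) has_integral xi z x) {0..}"
proof -
  note z = assms
  define F where "F t = laguerre x t * resolvent_kernel z t - phi z x * resolvent_kernel z t" for t
  have "poly_growth F"
    unfolding F_def
    by (intro poly_growth_diff poly_growth_cmult poly_growth_mult poly_growth_laguerre poly_growth_resolvent_kernel z)
  moreover have "weighted_integral F = xi z x"
    unfolding F_def xi_def psi_eq_psi_integral[OF z] psi_integral_def
    by (simp add: weighted_integral_diff weighted_integral_cmult poly_growth_cmult poly_growth_mult
        poly_growth_laguerre poly_growth_resolvent_kernel z mult.commute)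
  ultimately have "((\<lambda>t. of_real (exp (- t)) * F t) has_integral xi z x) {0..}"
    by (metis has_integral_weighted_integral)
  then show ?thesis
    by (rule has_integral_eq[rotated])
       (simp add: F_def resolvent_kernel_def laguerre_def exp_of_real[symmetric] divide_inverse algebra_simps)
qed

end
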